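(* Let $C_5 \rtimes_4 C_2$ be the group generated by $x, y$ with relations $x^2 = 1$, $y^5 = 1$, $yx = xy^4$, and let $H = \langle y \rangle$. Let $S$ be a sequence in $C_5 \rtimes_4 C_2$ with $|S| = 5$ that is free of product-$1$ subsequences. Then $S$ contains at least one element of $H$.
   Context: A sequence in a finite group $G$ is a finite list of elements of $G$, repetition allowed. A non-empty subsequence $(g_{n_1},\dots,g_{n_k})$ is a product-$1$ subsequence if $g_{\sigma(n_1)}\cdots g_{\sigma(n_k)} = 1$ for some permutation $\sigma$ of $\{n_1,\dots,n_k\}$; $S$ is free of product-$1$ subsequences if it has no such subsequence. *)

theory Defs
  imports "HOL-Algebra.Algebra"
begin

text \<open>The pair (a,b) with a in {0,1}, b in {0..4} stands for x^a y^b.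
  Since y^b x^c = x^c y^(b*4^c), we get x^a y^b x^c y^d = x^(a+c) y^(b*4^c + d).\<close>

definition SD10 :: "(nat \<times> nat) monoid" where
  "SD10 = \<lparr> carrier = {0..<2} \<times> {0..<5},
            monoid.mult = (\<lambda>(a,b) (c,d). ((a + c) mod 2, (b * 4 ^ c + d) mod 5)),
            monoid.one = (0, 0) \<rparr>"

definition gx :: "nat \<times> nat" where "gx = (1, 0)"
definition gy :: "nat \<times> nat" where "gy = (0, 1)"

definition H :: "(nat \<times> nat) set" where "H = generate SD10 {gy}"

definition gprod :: "('a, 'b) monoid_scheme \<Rightarrow> 'a list \<Rightarrow> 'a" where
  "gprod G xs = foldr (\<lambda>a b. a \<otimes>\<^bsub>G\<^esub> b) xs \<one>\<^bsub>G\<^esub>"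

text \<open>S has a product-1 subsequence: a nonempty set of indices, listed in some
  order (a permutation of the subsequence), whose product is 1.\<close>
definition has_product_one_subseq :: "('a, 'b) monoid_scheme \<Rightarrow> 'a list \<Rightarrow> bool" where
  "has_product_one_subseq G S \<longleftrightarrow>
     (\<exists>ns. ns \<noteq> [] \<and> distinct ns \<and> set ns \<subseteq> {..<length S} \<and>
           gprod G (map (\<lambda>i. S ! i) ns) = \<one>\<^bsub>G\<^esub>)"

definition product_one_free :: "('a, 'b) monoid_scheme \<Rightarrow> 'a list \<Rightarrow> bool" where
  "product_one_free G S \<longleftrightarrow> \<not> has_product_one_subseq G S"

lemma SD10_relations:
  "gx \<otimes>\<^bsub>SD10\<^esub> gx = \<one>\<^bsub>SD10\<^esub>"
  "gy [^]\<^bsub>SD10\<^esub> (5::nat) = \<one>\<^bsub>SD10\<^esub>"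
  "gy \<otimes>\<^bsub>SD10\<^esub> gx = gx \<otimes>\<^bsub>SD10\<^esub> (gy [^]\<^bsub>SD10\<^esub> (4::nat))"
  proof -
  have p: "gy [^]\<^bsub>SD10\<^esub> (n::nat) = (0, n mod 5)" for n
    by (induction n) (simp_all add: SD10_def gy_def mod_Suc)
  show "gx \<otimes>\<^bsub>SD10\<^esub> gx = \<one>\<^bsub>SD10\<^esub>" by (simp add: SD10_def gx_def)
  show "gy [^]\<^bsub>SD10\<^esub> (5::nat) = \<one>\<^bsub>SD10\<^esub>" using p[of 5] by (simp add: SD10_def)
  show "gy \<otimes>\<^bsub>SD10\<^esub> gx = gx \<otimes>\<^bsub>SD10\<^esub> (gy [^]\<^bsub>SD10\<^esub> (4::nat))"
    unfolding p by (simp add: SD10_def gx_def gy_def)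
qed

end

theory Submission
  imports Defs
begin

text \<open>If no term of \<open>S\<close> lies in \<open>H\<close>, every term is a reflection \<open>x y^b\<close>. Since
  \<open>x y^b \<cdot> x y^c = y^(c - b)\<close>, a repeated reflection is a product-1 subsequence of
  length 2, so the five terms are the five distinct reflections, and then
  \<open>x \<cdot> x y \<cdot> x y^3 \<cdot> x y^2 = y \<cdot> y^4 = 1\<close>.\<close>

lemma rotation_in_H: "b < 5 \<Longrightarrow> (0, b) \<in> H"
proof (induction b)
  case 0
  show ?case unfolding H_def using generate.one[of SD10 "{gy}"] by (simp add: SD10_def)
next
  case (Suc b)
  have "gy \<in> H" unfolding H_def by (rule generate.incl) simp
  moreover have "(0, b) \<in> H" using Suc by simp
  ultimately have "gy \<otimes>\<^bsub>SD10\<^esub> (0, b) \<in> H" unfolding H_def by (rule generate.eng)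
  moreover have "gy \<otimes>\<^bsub>SD10\<^esub> (0, b) = (0, Suc b)"
    using Suc by (simp add: SD10_def gy_def)
  ultimately show ?case by simp
qed

lemma reflection_if_not_in_H:
  assumes "s \<in> carrier SD10" and "s \<notin> H"
  shows "s \<in> {1} \<times> {..<5}"
  using assms rotation_in_H by (cases s) (auto simp: SD10_def less_2_cases_iff)

lemma reflection_mult_self:
  assumes "s \<in> {1} \<times> {..<5}"
  shows "s \<otimes>\<^bsub>SD10\<^esub> s = \<one>\<^bsub>SD10\<^esub>"
proof -
  obtain b where "s = (1, b)" "b < 5" using assms by auto
  moreover have "(b * 4 + b) mod 5 = 0" by simp
  ultimately show ?thesis by (simp add: SD10_def mod_add_right_eq)
qed

lemma product_one_free_imp_gprod_neq_one:
  assumes "product_one_free G S" and "distinct S"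
    and "xs \<noteq> []" and "distinct xs" and "set xs \<subseteq> set S"
  shows "gprod G xs \<noteq> \<one>\<^bsub>G\<^esub>"
proof
  assume one: "gprod G xs = \<one>\<^bsub>G\<^esub>"
  define pos where "pos = the_inv_into {..<length S} (\<lambda>i. S ! i)"
  have bij: "bij_betw pos (set S) {..<length S}"
    unfolding pos_def using assms(2) by (intro bij_betw_the_inv_into bij_betw_nth) simp_all
  let ?ns = "map pos xs"
  have "S ! pos x = x" if "x \<in> set S" for x
    unfolding pos_def using f_the_inv_into_f_bij_betw[OF bij_betw_nth[OF assms(2)]] that by simp
  then have "map (\<lambda>i. S ! i) ?ns = xs" using assms(5) by (simp add: map_idI subset_iff)
  moreover have "distinct ?ns"
    using assms(4,5) bij by (auto simp: distinct_map bij_betw_def intro: inj_on_subset)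
  moreover have "set ?ns \<subseteq> {..<length S}" using assms(5) bij by (auto simp: bij_betw_def)
  ultimately have "has_product_one_subseq G S"
    unfolding has_product_one_subseq_def using assms(3) one by (intro exI[of _ ?ns]) simp
  then show False using assms(1) by (simp add: product_one_free_def)
qed

lemma product_one_free_reflections_distinct:
  assumes "product_one_free SD10 S" and "set S \<subseteq> {1} \<times> {..<5}"
  shows "distinct S"
proof (rule ccontr)
  assume "\<not> distinct S"
  then obtain i j where ij: "i < length S" "j < length S" "i \<noteq> j" "S ! i = S ! j"
    by (auto simp: distinct_conv_nth)
  have refl: "S ! j \<in> {1} \<times> {..<5}" using ij(2) assms(2) by (meson nth_mem subsetD)
  then have "S ! j \<otimes>\<^bsub>SD10\<^esub> \<one>\<^bsub>SD10\<^esub> = S ! j" by (auto simp: SD10_def)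
  then have "gprod SD10 (map (\<lambda>k. S ! k) [i, j]) = \<one>\<^bsub>SD10\<^esub>"
    using ij(4) reflection_mult_self[OF refl] by (simp add: gprod_def)
  then have "has_product_one_subseq SD10 S"
    unfolding has_product_one_subseq_def using ij by (intro exI[of _ "[i, j]"]) simp
  then show False using assms(1) by (simp add: product_one_free_def)
qed

theorem proposition1:
  fixes S :: "(nat \<times> nat) list"
  assumes "set S \<subseteq> carrier SD10"
    and "length S = 5"
    and "product_one_free SD10 S"
  shows "\<exists>s\<in>set S. s \<in> H"
proof (rule ccontr)
  assume "\<not> (\<exists>s\<in>set S. s \<in> H)"
  then have refl: "set S \<subseteq> {1} \<times> {..<5}"
    using assms(1) reflection_if_not_in_H by blast
  have dist: "distinct S"
    using product_one_free_reflections_distinct[OF assms(3) refl] .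
  have "card (set S) = card ({1::nat} \<times> {..<5::nat})"
    using distinct_card[OF dist] assms(2) by simp
  then have all: "set S = {1} \<times> {..<5}"
    using refl by (intro card_subset_eq) auto
  have "gprod SD10 [(1, 0), (1, 1), (1, 3), (1, 2)] = \<one>\<^bsub>SD10\<^esub>"
    by (simp add: gprod_def SD10_def)
  moreover have "gprod SD10 [(1, 0), (1, 1), (1, 3), (1, 2)] \<noteq> \<one>\<^bsub>SD10\<^esub>"
    using assms(3) dist by (rule product_one_free_imp_gprod_neq_one) (auto simp: all)
  ultimately show False by contradiction
qed

end
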